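(* Let $t\ge2$ be an integer and let $\chi_t$ be as in the context. Then: (i) for every integer $n$ with $\chi_t(n)\neq 0$, the number $\frac{n^2-(2^{t+1}-3)^2}{3\cdot 2^{t+2}}$ is an integer; and (ii) for each root of unity $\zeta$, the function $n\mapsto \zeta^{\frac{n^2-(2^{t+1}-3)^2}{3\cdot 2^{t+2}}}\chi_t(n)$ (taken to be $0$ when $\chi_t(n)=0$) is periodic and has mean value zero.
   Context: Define $\chi_t:\mathbb{Z}\to\{0,\pm1\}$, periodic modulo $3\cdot2^{t+1}$, by $\chi_t(n)=1$ if $n\equiv 2^{t+1}-3$ or $3+2^{t+2}\pmod{3\cdot 2^{t+1}}$, $\chi_t(n)=-1$ if $n\equiv 2^{t+1}+3$ or $2^{t+2}-3\pmod{3\cdot2^{t+1}}$, and $\chi_t(n)=0$ otherwise. A periodic function has mean value zero if its sum over a full period is zero. *)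

theory Defs
  imports Complex_Main
begin

definition chi :: "nat \<Rightarrow> int \<Rightarrow> int" where
  "chi t n = (let M = 3 * 2^(t+1) :: int in
     if n mod M = (2^(t+1) - 3) mod M \<or> n mod M = (3 + 2^(t+2)) mod M then 1
     else if n mod M = (2^(t+1) + 3) mod M \<or> n mod M = (2^(t+2) - 3) mod M then -1
     else 0)"

text \<open>The exponent (n^2 - (2^(t+1)-3)^2) / (3 * 2^(t+2)) (an integer when chi t n \<noteq> 0).\<close>
definition expo :: "nat \<Rightarrow> int \<Rightarrow> int" where
  "expo t n = (n^2 - (2^(t+1) - 3)^2) div (3 * 2^(t+2))"

definition root_of_unity :: "complex \<Rightarrow> bool" where
  "root_of_unity z \<longleftrightarrow> (\<exists>k::nat. k > 0 \<and> z ^ k = 1)"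

definition periodic_mean_zero :: "(int \<Rightarrow> complex) \<Rightarrow> bool" where
  "periodic_mean_zero f \<longleftrightarrow>
     (\<exists>p::int. p > 0 \<and> (\<forall>n. f (n + p) = f n) \<and> (\<Sum>n\<in>{0..<p}. f n) = 0)"

end

(*
  Write N = 2^(t+1). Then chi t n is 1 if n = +-(N - 3) and -1 if n = +-(N + 3) modulo 3N.
  Squaring these congruences gives (i), since (N + 3)^2 - (N - 3)^2 = 12N.

  For (ii) let zeta^k = 1 and P = 3 * 2^(t+2) * k. The twisted function is P-periodic,
  because n = n' (mod P) forces n^2 = n'^2 (mod P), i.e. expo t n = expo t n' (mod k).
  By the Chinese remainder theorem there is u with u = -1 modulo the 2-part of P and u = 1
  modulo its odd part. Then n |-> u n is an involution of Z/P that fixes n^2 mod P but,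
  as u = 1 (mod 3) and u = -1 (mod N), swaps the classes +-(N - 3) and +-(N + 3) modulo 3N.
  So it negates the twisted function, whose sum over a period therefore vanishes.
*)
theory Submission
  imports Defs "HOL-Number_Theory.Cong"
begin

definition cong_pm :: "int \<Rightarrow> int \<Rightarrow> int \<Rightarrow> bool" where
  "cong_pm n a m \<longleftrightarrow> [n = a] (mod m) \<or> [n = - a] (mod m)"

lemma cong_pm_cong:
  assumes "[n = n'] (mod m)"
  shows "cong_pm n a m \<longleftrightarrow> cong_pm n' a m"
  using assms unfolding cong_pm_def by (meson cong_sym cong_trans)

lemma cong_pm_mult:
  assumes "cong_pm n a m" "[u * a = b] (mod m)"
  shows "cong_pm (u * n) b m"
  using assms unfolding cong_pm_def
  by (metis cong_scalar_left cong_trans cong_uminus mult_minus_right)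

lemma cong_square_if_cong_pm:
  fixes n a m :: int
  assumes "even m" "cong_pm n a m"
  shows "[n^2 = a^2] (mod 2 * m)"
proof -
  obtain c q where "c = a \<or> c = - a" and n: "n = c + m * q"
    using assms(2) unfolding cong_pm_def by (metis cong_sym cong_iff_lin)
  obtain r where m: "m = 2 * r" using assms(1) by blast
  have "n^2 = c^2 + (2 * m) * (c * q + r * q^2)"
    unfolding n m by (simp add: power2_eq_square algebra_simps)
  moreover have "c^2 = a^2" using \<open>c = a \<or> c = - a\<close> by auto
  ultimately show ?thesis by (simp add: cong_iff_dvd_diff)
qed

lemma not_cong_pm_both:
  fixes N :: int
  assumes "N > 2"
  shows "\<not> (cong_pm n (N - 3) (3 * N) \<and> cong_pm n (N + 3) (3 * N))"
proof
  assume "cong_pm n (N - 3) (3 * N) \<and> cong_pm n (N + 3) (3 * N)"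
  then have "[N - 3 = N + 3] (mod 3 * N) \<or> [N - 3 = - (N + 3)] (mod 3 * N)
      \<or> [- (N - 3) = N + 3] (mod 3 * N) \<or> [- (N - 3) = - (N + 3)] (mod 3 * N)"
    unfolding cong_pm_def by (meson cong_sym cong_trans)
  then have "3 * N dvd 6 \<or> 3 * N dvd 2 * N"
    unfolding cong_iff_dvd_diff by (auto simp: algebra_simps)
  moreover have "\<not> 3 * N dvd d" if "0 < d" "d < 3 * N" for d
    using that zdvd_imp_le[of "3 * N" d] by auto
  ultimately show False using assms by auto
qed

lemma cong_pm_mult_swap:
  fixes N u :: int
  assumes "[u = 1] (mod 3)" "[u = -1] (mod N)"
  shows "cong_pm (u * n) (N + 3) (3 * N) \<longleftrightarrow> cong_pm n (N - 3) (3 * N)"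
    and "cong_pm (u * n) (N - 3) (3 * N) \<longleftrightarrow> cong_pm n (N + 3) (3 * N)"
proof -
  have u_N: "[N * u = N * 1] (mod 3 * N)"
    using cong_cmult_leftI[OF assms(1), of N] by (simp add: ac_simps)
  have u_3: "[3 * u = 3 * -1] (mod 3 * N)"
    using cong_cmult_leftI[OF assms(2), of 3] .
  have swap_minus: "[u * (N - 3) = N + 3] (mod 3 * N)"
    using cong_diff[OF u_N u_3] by (simp add: algebra_simps)
  have swap_plus: "[u * (N + 3) = N - 3] (mod 3 * N)"
    using cong_add[OF u_N u_3] by (simp add: algebra_simps)
  have "3 * N dvd (u - 1) * (u + 1)"
    using mult_dvd_mono assms unfolding cong_iff_dvd_diff by fastforce
  then have "[u * u = 1] (mod 3 * N)"
    unfolding cong_iff_dvd_diff by (simp add: algebra_simps)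
  then have u_sq: "[u * (u * n) = n] (mod 3 * N)"
    using cong_scalar_right[of "u * u" 1 "3 * N" n] by (simp add: ac_simps)
  show "cong_pm (u * n) (N + 3) (3 * N) \<longleftrightarrow> cong_pm n (N - 3) (3 * N)"
    using cong_pm_mult[OF _ swap_minus, of n] cong_pm_mult[OF _ swap_plus, of "u * n"]
      cong_pm_cong[OF u_sq] by blast
  show "cong_pm (u * n) (N - 3) (3 * N) \<longleftrightarrow> cong_pm n (N + 3) (3 * N)"
    using cong_pm_mult[OF _ swap_plus, of n] cong_pm_mult[OF _ swap_minus, of "u * n"]
      cong_pm_cong[OF u_sq] by blast
qed

lemma chi_altdef:
  assumes "N = 2^(t+1)"
  shows "chi t n = (if cong_pm n (N - 3) (3 * N) then 1
                    else if cong_pm n (N + 3) (3 * N) then -1 else 0)"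
proof -
  have "[3 + 2^(t+2) = - (N - 3)] (mod 3 * N)" "[2^(t+2) - 3 = - (N + 3)] (mod 3 * N)"
    using assms by (simp_all add: cong_iff_dvd_diff)
  then show ?thesis
    unfolding chi_def Let_def cong_pm_def cong_def[symmetric] assms[symmetric]
    by (smt (verit) cong_trans cong_sym)
qed

lemma chi_cong:
  assumes "[n = n'] (mod 3 * 2^(t+1))"
  shows "chi t n = chi t n'"
  using assms unfolding chi_def Let_def cong_def by (simp only:)

lemma chi_nonzero_imp_cong_square:
  assumes "chi t n \<noteq> 0"
  shows "[n^2 = (2^(t+1) - 3)^2] (mod 3 * 2^(t+2))"
proof -
  define N :: int where "N = 2^(t+1)"
  have modulus: "(3 * 2^(t+2) :: int) = 2 * (3 * N)" unfolding N_def by simp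
  have even: "even (3 * N)" unfolding N_def by simp
  consider "cong_pm n (N - 3) (3 * N)" | "cong_pm n (N + 3) (3 * N)"
    using assms chi_altdef[OF N_def] by (auto split: if_splits)
  then have "[n^2 = (N - 3)^2] (mod 2 * (3 * N))"
  proof cases
    case 2
    then have "[n^2 = (N + 3)^2] (mod 2 * (3 * N))" by (rule cong_square_if_cong_pm[OF even])
    moreover have "[(N + 3)^2 = (N - 3)^2] (mod 2 * (3 * N))"
      by (simp add: cong_iff_dvd_diff power2_eq_square algebra_simps)
    ultimately show ?thesis by (rule cong_trans)
  qed (rule cong_square_if_cong_pm[OF even])
  then show ?thesis unfolding modulus N_def .
qed

lemma expo_cong:
  fixes k :: int
  assumes "chi t n \<noteq> 0" "chi t n' \<noteq> 0" "[n^2 = n'^2] (mod 3 * 2^(t+2) * k)"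
  shows "[expo t n = expo t n'] (mod k)"
proof -
  define D :: int where "D = 3 * 2^(t+2)"
  have expo_mult: "expo t m * D = m^2 - (2^(t+1) - 3)^2" if "chi t m \<noteq> 0" for m
    using chi_nonzero_imp_cong_square[OF that]
    unfolding expo_def D_def cong_iff_dvd_diff by simp
  have "(expo t n - expo t n') * D = n^2 - n'^2"
    using expo_mult[OF assms(1)] expo_mult[OF assms(2)] by (simp add: algebra_simps)
  then have "k * D dvd (expo t n - expo t n') * D"
    using assms(3) unfolding D_def cong_iff_dvd_diff by (simp add: ac_simps)
  then show ?thesis
    unfolding cong_iff_dvd_diff D_def by simp
qed

lemma power_int_cong:
  fixes z :: "'a::division_ring"
  assumes "z ^ k = 1" "[i = j] (mod int k)"
  shows "z powi i = z powi j"
proof (cases "k = 0")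
  case True
  then show ?thesis using assms(2) by simp
next
  case False
  then have "z \<noteq> 0" using assms(1) by (metis power_0_left zero_neq_one)
  obtain q where j: "j = i + int k * q" using assms(2) unfolding cong_iff_lin by blast
  have "z powi j = z powi i * (z powi int k) powi q"
    unfolding j using \<open>z \<noteq> 0\<close> by (simp add: power_int_add power_int_mult)
  then show ?thesis using assms(1) by simp
qed

lemma exists_sqrt_one_cong:
  assumes "k > 0"
  shows "\<exists>u::int. [u * u = 1] (mod 3 * 2^(t+2) * int k) \<and> [u = 1] (mod 3) \<and> [u = -1] (mod 2^(t+1))"
proof -
  obtain m where k: "k = 2 ^ multiplicity 2 k * m" and "\<not> 2 dvd m"
    using multiplicity_decompose'[of k 2] assms by auto
  define A :: int where "A = 2^(t + 2 + multiplicity 2 k)"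
  define B :: int where "B = 3 * int m"
  have "odd B" unfolding B_def using \<open>\<not> 2 dvd m\<close> by simp
  then have "coprime A B" unfolding A_def by (simp del: power_Suc)
  then obtain u where u_A: "[u = -1] (mod A)" and u_B: "[u = 1] (mod B)"
    using binary_chinese_remainder_int by blast
  have "[u * u = (-1) * (-1)] (mod A)" "[u * u = 1 * 1] (mod B)"
    using cong_mult u_A u_B by blast+
  then have "[u * u = 1] (mod A * B)"
    using coprime_cong_mult \<open>coprime A B\<close> by simp
  moreover have "A * B = 3 * 2^(t+2) * int k"
    by (subst k) (simp add: A_def B_def power_add)
  moreover have "[u = 1] (mod 3)"
    using u_B cong_dvd_modulus unfolding B_def by fastforce
  moreover have "[u = -1] (mod 2^(t+1))"
    using u_A by (rule cong_dvd_modulus) (simp add: A_def le_imp_power_dvd del: power_Suc)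
  ultimately show ?thesis by auto
qed

lemma chi_mult_eq_uminus:
  assumes "t > 0" "[u = 1] (mod 3)" "[u = -1] (mod 2^(t+1))"
  shows "chi t (u * n) = - chi t n"
proof -
  define N :: int where "N = 2^(t+1)"
  have "N > 2"
    unfolding N_def using power_increasing[of 2 "t+1" "2::int"] assms(1) by simp
  note minus_to_plus = cong_pm_mult_swap(1)[OF assms(2) assms(3)[folded N_def]]
  note plus_to_minus = cong_pm_mult_swap(2)[OF assms(2) assms(3)[folded N_def]]
  consider "cong_pm n (N - 3) (3 * N)"
    | "cong_pm n (N + 3) (3 * N)" "\<not> cong_pm n (N - 3) (3 * N)"
    | "\<not> cong_pm n (N + 3) (3 * N)" "\<not> cong_pm n (N - 3) (3 * N)"
    by blast
  then show ?thesis
  proof cases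
    case 1
    then have "cong_pm (u * n) (N + 3) (3 * N)" using minus_to_plus by blast
    then have "\<not> cong_pm (u * n) (N - 3) (3 * N)"
      using not_cong_pm_both[OF \<open>N > 2\<close>] by blast
    with 1 \<open>cong_pm (u * n) (N + 3) (3 * N)\<close> show ?thesis
      unfolding chi_altdef[OF N_def] by simp
  next
    case 2
    then show ?thesis
      using plus_to_minus unfolding chi_altdef[OF N_def] by simp
  next
    case 3
    then show ?thesis
      using plus_to_minus minus_to_plus unfolding chi_altdef[OF N_def] by simp
  qed
qed

definition twisted_chi :: "nat \<Rightarrow> complex \<Rightarrow> int \<Rightarrow> complex" where
  "twisted_chi t \<zeta> n = (if chi t n = 0 then 0 else \<zeta> powi expo t n * of_int (chi t n))"

lemma twisted_chi_cong:
  assumes "\<zeta> ^ k = 1" "[n = n'] (mod 3 * 2^(t+2) * int k)"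
  shows "twisted_chi t \<zeta> n = twisted_chi t \<zeta> n'"
proof -
  have "[n = n'] (mod 3 * 2^(t+1))"
    using assms(2) by (rule cong_dvd_modulus) (simp add: le_imp_power_dvd del: power_Suc)
  then have chi_eq: "chi t n = chi t n'" by (rule chi_cong)
  have "[n^2 = n'^2] (mod 3 * 2^(t+2) * int k)" using assms(2) by (rule cong_pow)
  then have "[expo t n = expo t n'] (mod int k)" if "chi t n \<noteq> 0"
    using expo_cong that chi_eq by simp
  then have "\<zeta> powi expo t n = \<zeta> powi expo t n'" if "chi t n \<noteq> 0"
    using power_int_cong[OF assms(1)] that by blast
  then show ?thesis unfolding twisted_chi_def chi_eq by simp
qed

lemma twisted_chi_mult_eq_uminus:
  assumes "\<zeta> ^ k = 1" "t > 0" "[u * u = 1] (mod 3 * 2^(t+2) * int k)"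
    and "[u = 1] (mod 3)" "[u = -1] (mod 2^(t+1))"
  shows "twisted_chi t \<zeta> (u * n) = - twisted_chi t \<zeta> n"
proof -
  have chi_eq: "chi t (u * n) = - chi t n" using assms(2,4,5) by (rule chi_mult_eq_uminus)
  have "[(u * n)^2 = n^2] (mod 3 * 2^(t+2) * int k)"
    using cong_scalar_right[OF assms(3), of "n^2"] by (simp add: power2_eq_square ac_simps)
  then have "[expo t (u * n) = expo t n] (mod int k)" if "chi t n \<noteq> 0"
    using expo_cong that chi_eq by simp
  then have "\<zeta> powi expo t (u * n) = \<zeta> powi expo t n" if "chi t n \<noteq> 0"
    using power_int_cong[OF assms(1)] that by blast
  then show ?thesis unfolding twisted_chi_def chi_eq by simp
qed

lemma periodic_mean_zero_if_odd_under_involution: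
  assumes "P > 0" "\<And>n n'. [n = n'] (mod P) \<Longrightarrow> f n = f n'"
    and "[u * u = 1] (mod P)" "\<And>n. f (u * n) = - f n"
  shows "periodic_mean_zero f"
proof -
  define g where "g n = (u * n) mod P" for n
  have g_range: "g n \<in> {0..<P}" for n
    unfolding g_def using \<open>P > 0\<close> by simp
  have g_involution: "g (g n) = n" if "n \<in> {0..<P}" for n
  proof -
    have "[g (g n) = u * u * n] (mod P)"
      unfolding g_def by (simp add: cong_def mod_mult_right_eq ac_simps)
    also have "[u * u * n = 1 * n] (mod P)" using assms(3) by (rule cong_scalar_right)
    finally have "[g (g n) = n] (mod P)" by simp
    then show ?thesis
      using g_range[of "g n"] that by (auto intro: cong_less_imp_eq_int)
  qed
  have f_g: "f (g n) = - f n" for n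
    using assms(2)[of "g n" "u * n"] assms(4) unfolding g_def by simp
  have "(\<Sum>n\<in>{0..<P}. f n) = (\<Sum>n\<in>{0..<P}. f (g n))"
    by (rule sum.reindex_bij_witness[of _ g g]) (use g_range g_involution in auto)
  also have "\<dots> = - (\<Sum>n\<in>{0..<P}. f n)" by (simp add: f_g sum_negf)
  finally have "(\<Sum>n\<in>{0..<P}. f n) = 0" by simp
  moreover have "f (n + P) = f n" for n using assms(2)[of "n + P" n] by (simp add: cong_def)
  ultimately show ?thesis unfolding periodic_mean_zero_def using \<open>P > 0\<close> by auto
qed

theorem proposition2p2:
  fixes t :: nat
  assumes "t \<ge> 2"
  shows "(\<forall>n::int. chi t n \<noteq> 0 \<longrightarrow> (3 * 2^(t+2)) dvd (n^2 - (2^(t+1) - 3)^2))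
    \<and> (\<forall>\<zeta>::complex. root_of_unity \<zeta> \<longrightarrow>
         periodic_mean_zero (\<lambda>n. if chi t n = 0 then 0
                                   else \<zeta> powi (expo t n) * of_int (chi t n)))"
proof (intro conjI allI impI)
  fix n :: int
  assume "chi t n \<noteq> 0"
  then show "(3 * 2^(t+2)) dvd (n^2 - (2^(t+1) - 3)^2)"
    using chi_nonzero_imp_cong_square cong_iff_dvd_diff by blast
next
  fix \<zeta> :: complex
  assume "root_of_unity \<zeta>"
  then obtain k where "k > 0" "\<zeta> ^ k = 1" unfolding root_of_unity_def by blast
  then obtain u where u: "[u * u = 1] (mod 3 * 2^(t+2) * int k)"
    "[u = 1] (mod 3)" "[u = -1] (mod 2^(t+1))"
    using exists_sqrt_one_cong by blast
  have "t > 0" using assms by simp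
  have "periodic_mean_zero (twisted_chi t \<zeta>)"
  proof (rule periodic_mean_zero_if_odd_under_involution)
    show "3 * 2^(t+2) * int k > 0" using \<open>k > 0\<close> by simp
    show "twisted_chi t \<zeta> n = twisted_chi t \<zeta> n'"
      if "[n = n'] (mod 3 * 2^(t+2) * int k)" for n n'
      using \<open>\<zeta> ^ k = 1\<close> that by (rule twisted_chi_cong)
    show "twisted_chi t \<zeta> (u * n) = - twisted_chi t \<zeta> n" for n
      using \<open>\<zeta> ^ k = 1\<close> \<open>t > 0\<close> u by (rule twisted_chi_mult_eq_uminus)
  qed (rule u(1))
  then show "periodic_mean_zero (\<lambda>n. if chi t n = 0 then 0
                                   else \<zeta> powi (expo t n) * of_int (chi t n))"
    unfolding twisted_chi_def .
qed

end
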